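(* Let $\kappa\ge\nu\ge\omega$ be cardinals with $\nu$ regular, and let $n\ge1$ and $k\ge1$ be natural numbers. If $\mathcal A$ is a $(k+1,\nu)$-almost disjoint family of finite subsets of $\kappa^{+(n-1)}$ such that $|A|>n\cdot k$ for every $A\in\mathcal A$, then $\chi_{\rm CF}(\mathcal A)\le\kappa$.
   Context: A family $\mathcal A$ is $(\mu,\nu)$-almost disjoint if $|\bigcap\mathcal B|<\mu$ for every $\mathcal B\subseteq\mathcal A$ with $|\mathcal B|=\nu$. For a family $\mathcal A$ and cardinal $\rho$, $f:\bigcup\mathcal A\to\rho$ is a conflict free coloring of $\mathcal A$ if for every $A\in\mathcal A$ there is $\zeta<\rho$ with $|A\cap f^{-1}\{\zeta\}|=1$; $\chi_{\rm CF}(\mathcal A)$ is the least such $\rho$. $\kappa^{+(n-1)}$ is the $(n-1)$-th successor of $\kappa$ ($\kappa^{+0}=\kappa$). *)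

theory Defs
  imports Main
begin

unbundle cardinal_syntax

text \<open>Cardinals are represented by sets via the library's cardinal order relations
  (card_of, ordLeq, ordIso, cardSuc, regularCard from BNF_Cardinal_Order_Relation).\<close>

definition succ_pow :: "'b set \<Rightarrow> nat \<Rightarrow> 'a set \<Rightarrow> bool" where
  "succ_pow K m X \<equiv> \<exists>S :: nat \<Rightarrow> 'a set.
      card_of (S 0) =o card_of K \<and> (\<forall>i<m. card_of (S (Suc i)) =o cardSuc (card_of (S i))) \<and> S m = X"

definition almost_disjoint :: "nat \<Rightarrow> 'b set \<Rightarrow> 'a set set \<Rightarrow> bool" where
  "almost_disjoint mu N \<A> \<equiv>
     \<forall>\<B>. \<B> \<subseteq> \<A> \<and> |\<B>| =o |N| \<longrightarrow> finite (\<Inter>\<B>) \<and> card (\<Inter>\<B>) < mu"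

definition cf_coloring :: "'a set set \<Rightarrow> 'c set \<Rightarrow> ('a \<Rightarrow> 'c) \<Rightarrow> bool" where
  "cf_coloring \<A> C f \<equiv> (\<forall>x\<in>\<Union>\<A>. f x \<in> C) \<and>
     (\<forall>A\<in>\<A>. \<exists>z\<in>C. card {x\<in>A. f x = z} = 1)"

definition chi_CF_le :: "'a set set \<Rightarrow> 'b set \<Rightarrow> bool" where
  "chi_CF_le \<A> K \<equiv> \<exists>(C::'b set) f. |C| \<le>o |K| \<and> cf_coloring \<A> C f"

end

theory Submission
  imports Defs
begin

text \<open>
  Call a member of the family heavy for a set U if it meets U in at least k+1 points. By almost
  disjointness fewer than \<nu> members contain a given (k+1)-set, so the members heavy for U cover
  a set of size at most max(|U|, \<nu>), and of size below \<kappa> if |U| is.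

  The colouring is built by well-founded recursion along an order R in which every member with
  more than t points in the ground set has a peak, its R-largest point. If every fibre (the points
  of the members with peak x) has fewer than \<kappa> elements, each x gets a colour in \<kappa>
  different from those of its fibre, and then the peak of a member is its only point of that
  colour. For a set of size \<kappa> and t = k take its cardinal well-order: the fibre of x lies in
  the heavy cover of the initial segment up to x. Passing from \<lambda> to \<lambda>^+ raises t by k:
  cover a set Y of size \<lambda>^+ by the increasing chain of heavy-closed stages of size \<lambda>
  generated by its initial segments, rank each point by the first stage containing it, and order
  Y by rank and within each rank layer by an order for sets of size \<lambda>. A member with more
  than t + k points in Y has at most k of them below its top layer, since otherwise it would be
  heavy for an earlier stage and hence lie in it.
\<close>

lemma card_of_finite_ordLess_infinite: "finite A \<Longrightarrow> infinite B \<Longrightarrow> |A| <o |B|"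
  using finite_ordLess_infinite[of "|A|" "|B|"] card_of_Well_order Field_card_of by metis

definition subsets_of_card :: "nat \<Rightarrow> 'a set \<Rightarrow> 'a set set" where
  "subsets_of_card j V = {s. s \<subseteq> V \<and> finite s \<and> card s = j}"

lemma card_of_subsets_of_card_ordLeq:
  assumes "infinite V"
  shows "|subsets_of_card j V| \<le>o |V|"
proof (induction j)
  case 0
  have "subsets_of_card 0 V = {{}}" by (auto simp: subsets_of_card_def)
  then show ?case
    using ordLess_imp_ordLeq[OF card_of_finite_ordLess_infinite[of "{{}}" V]] assms by simp
next
  case (Suc j)
  have "subsets_of_card (Suc j) V \<subseteq> (\<lambda>(x, s). insert x s) ` (V \<times> subsets_of_card j V)"
  proof
    fix s assume "s \<in> subsets_of_card (Suc j) V"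
    then have s: "s \<subseteq> V" "finite s" "card s = Suc j" by (auto simp: subsets_of_card_def)
    then obtain x where "x \<in> s" by fastforce
    with s show "s \<in> (\<lambda>(x, s). insert x s) ` (V \<times> subsets_of_card j V)"
      by (intro image_eqI[of _ _ "(x, s - {x})"]) (auto simp: subsets_of_card_def)
  qed
  moreover have "|V \<times> subsets_of_card j V| \<le>o |V|"
    using card_of_Sigma_ordLeq_infinite[OF assms, of V "\<lambda>_. subsets_of_card j V"] Suc
      ordLeq_refl card_of_Card_order by blast
  ultimately show ?case
    by (meson card_of_mono1 card_of_image ordLeq_transitive)
qed

lemma card_of_subsets_of_card_ordLess:
  assumes "infinite K" and "|V| <o |K|"
  shows "|subsets_of_card j V| <o |K|"
proof (cases "finite V")
  case True
  then have "finite (subsets_of_card j V)"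
    by (rule rev_finite_subset[OF finite_Pow_iff[THEN iffD2]]) (auto simp: subsets_of_card_def)
  then show ?thesis using card_of_finite_ordLess_infinite assms(1) by blast
next
  case False
  then show ?thesis
    using card_of_subsets_of_card_ordLeq assms(2) ordLeq_ordLess_trans by blast
qed

lemma wo_rel_card_of: "wo_rel |A|"
  unfolding wo_rel_def by (rule card_of_Well_order)

lemma card_of_under_ordLess:
  assumes "|A| \<le>o |K|" and "infinite K"
  shows "|under |A| a| <o |K|"
proof (cases "a \<in> A")
  case True
  have "|underS |A| a| <o |A|"
    using card_of_underS[OF card_of_Card_order, of a A] True by (simp add: Field_card_of)
  then have "|underS |A| a| <o |K|" using assms(1) by (rule ordLess_ordLeq_trans)
  then have "|underS |A| a \<union> {a}| <o |K|"
    using card_of_Un_ordLess_infinite[OF assms(2)]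
      card_of_finite_ordLess_infinite[OF _ assms(2), of "{a}"] by blast
  moreover have "under |A| a \<subseteq> underS |A| a \<union> {a}" unfolding under_def underS_def by blast
  ultimately show ?thesis using ordLeq_ordLess_trans[OF card_of_mono1] by blast
next
  case False
  then have "under |A| a = {}" using FieldI2[of _ a "|A|"] by (auto simp: under_def Field_card_of)
  then show ?thesis using card_of_finite_ordLess_infinite[OF finite.emptyI assms(2)] by simp
qed

lemma (in wo_rel) finite_has_max:
  assumes "finite F" "F \<noteq> {}" "F \<subseteq> Field r"
  shows "\<exists>m\<in>F. \<forall>y\<in>F. (y, m) \<in> r"
  using assms
proof (induction F rule: finite_ne_induct)
  case (singleton x)
  then show ?case using REFL by (simp add: refl_on_def)
next
  case (insert x F)
  then obtain m where m: "m \<in> F" "\<forall>y\<in>F. (y, m) \<in> r" by auto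
  have "(x, m) \<in> r \<or> (m, x) \<in> r" using TOTALS insert.prems m(1) by blast
  then show ?case
  proof
    assume "(m, x) \<in> r"
    with m have "\<forall>y\<in>F. (y, x) \<in> r" using TRANS unfolding trans_def by blast
    moreover have "(x, x) \<in> r" using REFL insert.prems by (simp add: refl_on_def)
    ultimately show ?case by blast
  qed (use m in blast)
qed

lemma finite_subset_UN_mono:
  fixes G :: "nat \<Rightarrow> 'a set"
  assumes "mono G" "finite s" "s \<subseteq> (\<Union>j. G j)"
  shows "\<exists>j. s \<subseteq> G j"
  using assms(2,3)
proof (induction s rule: finite_induct)
  case (insert x s)
  then obtain i j where "x \<in> G i" "s \<subseteq> G j" by blast
  moreover have "G i \<subseteq> G (max i j)" "G j \<subseteq> G (max i j)"
    using \<open>mono G\<close> by (auto simp: mono_def)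
  ultimately show ?case by blast
qed simp

lemma wf_colouring_avoiding_predecessors:
  fixes V :: "'a \<Rightarrow> 'a set" and K :: "'b set"
  assumes "wf R"
    and V_below: "\<And>x y. y \<in> V x \<Longrightarrow> y \<noteq> x \<Longrightarrow> (y, x) \<in> R"
    and V_small: "\<And>x. |V x| <o |K|"
  shows "\<exists>f. \<forall>x. f x \<in> K \<and> f x \<notin> f ` (V x - {x})"
proof -
  define pick where "pick g x = (SOME c. c \<in> K \<and> c \<notin> g ` (V x - {x}))"
    for g :: "'a \<Rightarrow> 'b" and x
  define f where "f = wfrec R pick"
  have "f x \<in> K \<and> f x \<notin> f ` (V x - {x})" for x
  proof -
    have "cut f R x ` (V x - {x}) = f ` (V x - {x})"
      using V_below by (intro image_cong refl cut_apply) blast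
    moreover have "f x = pick (cut f R x) x" unfolding f_def by (rule wfrec[OF \<open>wf R\<close>])
    ultimately have f_x: "f x = (SOME c. c \<in> K \<and> c \<notin> f ` (V x - {x}))"
      unfolding pick_def by simp
    have "\<not> K \<subseteq> f ` (V x - {x})"
    proof
      assume "K \<subseteq> f ` (V x - {x})"
      then have "|K| \<le>o |f ` (V x - {x})|" by (rule card_of_mono1)
      moreover have "|f ` (V x - {x})| \<le>o |V x|"
        using card_of_image card_of_mono1[of "V x - {x}" "V x"] ordLeq_transitive by blast
      ultimately have "|K| \<le>o |V x|" by (rule ordLeq_transitive)
      then show False using V_small not_ordLess_ordLeq by blast
    qed
    then have "\<exists>c. c \<in> K \<and> c \<notin> f ` (V x - {x})" by blast
    then show ?thesis unfolding f_x by (rule someI_ex)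
  qed
  then show ?thesis by blast
qed

lemma card_of_ordLeq_succ_chain:
  fixes S :: "nat \<Rightarrow> 'a set" and K :: "'b set"
  assumes "|S 0| =o |K|" and "\<forall>i<m. |S (Suc i)| =o cardSuc |S i|"
  shows "i \<le> m \<Longrightarrow> |K| \<le>o |S i|"
proof (induction i)
  case 0
  show ?case using ordIso_imp_ordLeq[OF ordIso_symmetric[OF assms(1)]] .
next
  case (Suc i)
  have "|S (Suc i)| =o cardSuc |S i|" using assms(2) Suc.prems by simp
  moreover have "|S i| \<le>o cardSuc |S i|"
    using cardSuc_greater[OF card_of_Card_order] ordLess_imp_ordLeq by blast
  ultimately have "|S i| \<le>o |S (Suc i)|" using ordIso_symmetric ordLeq_ordIso_trans by blast
  moreover have "|K| \<le>o |S i|" using Suc by simp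
  ultimately show ?case using ordLeq_transitive by blast
qed

locale cf_family =
  fixes \<A> :: "'a set set" and N :: "'c set" and K :: "'b set" and k :: nat
  assumes infinite_N: "infinite N" and N_le_K: "|N| \<le>o |K|" and regular_N: "regularCard |N|"
    and finite_members: "\<And>A. A \<in> \<A> \<Longrightarrow> finite A"
    and almost_disjoint_\<A>: "almost_disjoint (k + 1) N \<A>"
begin

lemma infinite_K: "infinite K"
  using card_of_ordLeq_infinite[OF N_le_K infinite_N] .

lemma stable_N: "stable |N|"
  using regularCard_stable[OF card_of_Card_order _ regular_N] infinite_N
  by (simp add: Field_card_of)

lemma card_of_members_containing_ordLess:
  assumes "s \<in> subsets_of_card (k + 1) UNIV"
  shows "|{A\<in>\<A>. s \<subseteq> A}| <o |N|"
proof (rule ccontr)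
  let ?F = "{A\<in>\<A>. s \<subseteq> A}"
  assume "\<not> |?F| <o |N|"
  then have "|N| \<le>o |?F|"
    using not_ordLess_iff_ordLeq[OF card_of_Well_order card_of_Well_order] by blast
  then obtain f where f: "inj_on f N" "f ` N \<subseteq> ?F" using card_of_ordLeq[of N ?F] by blast
  have "|f ` N| =o |N|"
    using f(1) card_of_ordIso[of N "f ` N"] ordIso_symmetric inj_on_imp_bij_betw by blast
  moreover have "f ` N \<subseteq> \<A>" using f(2) by blast
  ultimately have fin: "finite (\<Inter>(f ` N)) \<and> card (\<Inter>(f ` N)) < k + 1"
    using almost_disjoint_\<A> unfolding almost_disjoint_def by blast
  moreover have "s \<subseteq> \<Inter>(f ` N)" using f(2) by blast
  ultimately have "card s \<le> card (\<Inter>(f ` N))" by (intro card_mono) auto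
  with fin assms show False by (simp add: subsets_of_card_def)
qed

lemma card_of_Union_members_containing_ordLess:
  assumes "s \<in> subsets_of_card (k + 1) UNIV"
  shows "|\<Union>{A\<in>\<A>. s \<subseteq> A}| <o |N|"
proof -
  have "|\<Union>A\<in>{A\<in>\<A>. s \<subseteq> A}. A| <o |N|"
  proof (rule stable_UNION[OF stable_N card_of_members_containing_ordLess[OF assms]])
    fix A assume "A \<in> {A\<in>\<A>. s \<subseteq> A}"
    then show "|A| <o |N|" using finite_members card_of_finite_ordLess_infinite infinite_N by blast
  qed
  then show ?thesis by simp
qed

definition heavy :: "'a set \<Rightarrow> 'a set" where
  "heavy U = \<Union>{A\<in>\<A>. k + 1 \<le> card (A \<inter> U)}"

lemma heavy_mono:
  assumes "U \<subseteq> U'"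
  shows "heavy U \<subseteq> heavy U'"
proof
  fix x assume "x \<in> heavy U"
  then obtain A where A: "A \<in> \<A>" "k + 1 \<le> card (A \<inter> U)" "x \<in> A" unfolding heavy_def by blast
  have "card (A \<inter> U) \<le> card (A \<inter> U')" using finite_members A(1) assms by (intro card_mono) auto
  with A show "x \<in> heavy U'" unfolding heavy_def by (intro UnionI[of A]) auto
qed

lemma heavy_subset_UN:
  "heavy U \<subseteq> (\<Union>s\<in>subsets_of_card (k + 1) U. \<Union>{A\<in>\<A>. s \<subseteq> A})"
proof
  fix x assume "x \<in> heavy U"
  then obtain A where A: "A \<in> \<A>" "k + 1 \<le> card (A \<inter> U)" "x \<in> A" unfolding heavy_def by blast
  then obtain s where "s \<subseteq> A \<inter> U" "card s = k + 1" "finite s"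
    using obtain_subset_with_card_n by metis
  with A show "x \<in> (\<Union>s\<in>subsets_of_card (k + 1) U. \<Union>{A\<in>\<A>. s \<subseteq> A})"
    unfolding subsets_of_card_def by blast
qed

lemma card_of_heavy_ordLeq:
  assumes "infinite S" "|N| \<le>o |S|" "|U| \<le>o |S|"
  shows "|heavy U| \<le>o |S|"
proof -
  have "|\<Union>s\<in>subsets_of_card (k + 1) U. \<Union>{A\<in>\<A>. s \<subseteq> A}| \<le>o |S|"
  proof (rule card_of_UNION_ordLeq_infinite[OF assms(1)])
    show "|subsets_of_card (k + 1) U| \<le>o |S|"
    proof (cases "finite U")
      case True
      then have "finite (subsets_of_card (k + 1) U)"
        by (rule rev_finite_subset[OF finite_Pow_iff[THEN iffD2]]) (auto simp: subsets_of_card_def)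
      then show ?thesis
        using ordLess_imp_ordLeq[OF card_of_finite_ordLess_infinite] assms(1) by blast
    next
      case False
      then show ?thesis using ordLeq_transitive[OF card_of_subsets_of_card_ordLeq assms(3)] by blast
    qed
    show "\<forall>s\<in>subsets_of_card (k + 1) U. |\<Union>{A\<in>\<A>. s \<subseteq> A}| \<le>o |S|"
    proof
      fix s assume "s \<in> subsets_of_card (k + 1) U"
      then have "s \<in> subsets_of_card (k + 1) UNIV" by (simp add: subsets_of_card_def)
      then show "|\<Union>{A\<in>\<A>. s \<subseteq> A}| \<le>o |S|"
        using ordLess_imp_ordLeq[OF card_of_Union_members_containing_ordLess] assms(2)
          ordLeq_transitive by blast
    qed
  qed
  then show ?thesis using ordLeq_transitive[OF card_of_mono1[OF heavy_subset_UN]] by blast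
qed

lemma card_of_heavy_ordLess:
  assumes U: "|U| <o |K|"
  shows "|heavy U| <o |K|"
proof (cases "|N| =o |K|")
  case True
  have "stable |K|" using stable_ordIso1[OF stable_N ordIso_symmetric[OF True]] .
  moreover have "|subsets_of_card (k + 1) U| <o |K|"
    using card_of_subsets_of_card_ordLess[OF infinite_K U] .
  moreover have "\<forall>s\<in>subsets_of_card (k + 1) U. |\<Union>{A\<in>\<A>. s \<subseteq> A}| <o |K|"
  proof
    fix s assume "s \<in> subsets_of_card (k + 1) U"
    then have "s \<in> subsets_of_card (k + 1) UNIV" by (simp add: subsets_of_card_def)
    then show "|\<Union>{A\<in>\<A>. s \<subseteq> A}| <o |K|"
      using ordLess_ordIso_trans[OF card_of_Union_members_containing_ordLess True] by blast
  qed
  ultimately have "|\<Union>s\<in>subsets_of_card (k + 1) U. \<Union>{A\<in>\<A>. s \<subseteq> A}| <o |K|"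
    by (rule card_of_UNION_ordLess_infinite)
  then show ?thesis using ordLeq_ordLess_trans[OF card_of_mono1[OF heavy_subset_UN]] by blast
next
  case False
  then have N_less_K: "|N| <o |K|" using N_le_K by (simp add: ordLeq_iff_ordLess_or_ordIso)
  consider "|U| \<le>o |N|" | "|N| \<le>o |U|"
    using ordLeq_total[OF card_of_Well_order card_of_Well_order] by blast
  then show ?thesis
  proof cases
    case 1
    then have "|heavy U| \<le>o |N|"
      by (rule card_of_heavy_ordLeq[OF infinite_N ordLeq_refl[OF card_of_Card_order]])
    then show ?thesis using N_less_K by (rule ordLeq_ordLess_trans)
  next
    case 2
    have "|heavy U| \<le>o |U|"
      using card_of_heavy_ordLeq[OF card_of_ordLeq_infinite[OF 2 infinite_N] 2
          ordLeq_refl[OF card_of_Card_order]] .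
    then show ?thesis using U by (rule ordLeq_ordLess_trans)
  qed
qed

definition peak_fibre :: "'a set \<Rightarrow> nat \<Rightarrow> ('a set \<Rightarrow> 'a) \<Rightarrow> 'a \<Rightarrow> 'a set" where
  "peak_fibre Y t peak x = \<Union>{A \<inter> Y | A. A \<in> \<A> \<and> t < card (A \<inter> Y) \<and> peak A = x}"

definition cf_ordering :: "'a set \<Rightarrow> nat \<Rightarrow> 'a rel \<Rightarrow> ('a set \<Rightarrow> 'a) \<Rightarrow> bool" where
  "cf_ordering Y t R peak \<longleftrightarrow> wf R \<and>
     (\<forall>A\<in>\<A>. t < card (A \<inter> Y) \<longrightarrow>
        peak A \<in> A \<inter> Y \<and> (\<forall>y\<in>A \<inter> Y. y \<noteq> peak A \<longrightarrow> (y, peak A) \<in> R)) \<and>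
     (\<forall>x. |peak_fibre Y t peak x| <o |K| )"

lemma colouring_of_cf_ordering:
  assumes ord: "cf_ordering Y t R peak"
  obtains f where "\<And>x. f x \<in> K \<and> f x \<notin> f ` (peak_fibre Y t peak x - {x})"
proof -
  have below: "(y, x) \<in> R" if y: "y \<in> peak_fibre Y t peak x" and "y \<noteq> x" for x y
  proof -
    obtain A where "A \<in> \<A>" "t < card (A \<inter> Y)" "peak A = x" "y \<in> A \<inter> Y"
      using y unfolding peak_fibre_def by blast
    with \<open>y \<noteq> x\<close> show ?thesis using ord unfolding cf_ordering_def by blast
  qed
  have "wf R" and "\<And>x. |peak_fibre Y t peak x| <o |K|"
    using ord unfolding cf_ordering_def by blast+
  then show ?thesis
    using wf_colouring_avoiding_predecessors[of R "peak_fibre Y t peak"] below that by blast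
qed

lemma chi_CF_le_if_cf_ordering:
  assumes ord: "cf_ordering X t R peak" and large: "\<And>A. A \<in> \<A> \<Longrightarrow> A \<subseteq> X \<and> t < card A"
  shows "chi_CF_le \<A> K"
proof -
  have peak: "peak A \<in> A \<and> (\<forall>y\<in>A. y \<noteq> peak A \<longrightarrow> (y, peak A) \<in> R)"
    and fibre: "A \<subseteq> peak_fibre X t peak (peak A)" if "A \<in> \<A>" for A
  proof -
    have AX: "A \<inter> X = A" using large[OF that] by blast
    then have "t < card (A \<inter> X)" using large[OF that] by simp
    then have "peak A \<in> A \<inter> X \<and> (\<forall>y\<in>A \<inter> X. y \<noteq> peak A \<longrightarrow> (y, peak A) \<in> R)"
      and "A \<inter> X \<subseteq> peak_fibre X t peak (peak A)"
      using ord that unfolding cf_ordering_def peak_fibre_def by blast+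
    with AX show "peak A \<in> A \<and> (\<forall>y\<in>A. y \<noteq> peak A \<longrightarrow> (y, peak A) \<in> R)"
      and "A \<subseteq> peak_fibre X t peak (peak A)" by simp_all
  qed
  obtain f where f: "\<And>x. f x \<in> K \<and> f x \<notin> f ` (peak_fibre X t peak x - {x})"
    using colouring_of_cf_ordering[OF ord] by blast
  have unique: "{y\<in>A. f y = f (peak A)} = {peak A}" if "A \<in> \<A>" for A
  proof -
    have "y = peak A" if "y \<in> A" "f y = f (peak A)" for y
    proof (rule ccontr)
      assume "y \<noteq> peak A"
      with \<open>y \<in> A\<close> fibre[OF \<open>A \<in> \<A>\<close>] have "f y \<in> f ` (peak_fibre X t peak (peak A) - {peak A})"
        by blast
      with f[of "peak A"] \<open>f y = f (peak A)\<close> show False by simp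
    qed
    then show ?thesis using peak[OF that] by blast
  qed
  have "cf_coloring \<A> K f" unfolding cf_coloring_def
  proof (intro conjI ballI)
    show "f x \<in> K" for x using f by blast
    show "\<exists>z\<in>K. card {x\<in>A. f x = z} = 1" if "A \<in> \<A>" for A
      using unique[OF that] f by (intro bexI[of _ "f (peak A)"]) auto
  qed
  then show ?thesis unfolding chi_CF_le_def using ordLeq_refl[OF card_of_Card_order] by blast
qed

lemma peak_fibre_subset_heavy_under:
  assumes peak: "\<And>A. A \<in> \<A> \<Longrightarrow> t < card (A \<inter> Y) \<Longrightarrow>
      peak A \<in> A \<inter> Y \<and> (\<forall>y\<in>A \<inter> Y. (y, peak A) \<in> r)"
    and "k \<le> t"
  shows "peak_fibre Y t peak x \<subseteq> heavy (under r x)"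
proof
  fix z assume "z \<in> peak_fibre Y t peak x"
  then obtain A where A: "A \<in> \<A>" "t < card (A \<inter> Y)" "peak A = x" "z \<in> A \<inter> Y"
    unfolding peak_fibre_def by blast
  have "A \<inter> Y \<subseteq> A \<inter> under r x" using peak[OF A(1,2)] A(3) unfolding under_def by blast
  moreover have "finite (A \<inter> under r x)" using finite_members[OF A(1)] by blast
  ultimately have "card (A \<inter> Y) \<le> card (A \<inter> under r x)" by (rule card_mono[rotated])
  with A(1,2) \<open>k \<le> t\<close> have "A \<in> {A \<in> \<A>. k + 1 \<le> card (A \<inter> under r x)}" by simp
  then show "z \<in> heavy (under r x)" unfolding heavy_def using A(4) by blast
qed

lemma cf_ordering_if_card_of_ordLeq:
  assumes "|Y| \<le>o |K|"
  shows "\<exists>R peak. cf_ordering Y k R peak"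
proof -
  define peak where "peak A = (SOME m. m \<in> A \<inter> Y \<and> (\<forall>y\<in>A \<inter> Y. (y, m) \<in> |Y| ))" for A
  have peak: "peak A \<in> A \<inter> Y \<and> (\<forall>y\<in>A \<inter> Y. (y, peak A) \<in> |Y| )"
    if "A \<in> \<A>" "k < card (A \<inter> Y)" for A
  proof -
    have "\<exists>m\<in>A \<inter> Y. \<forall>y\<in>A \<inter> Y. (y, m) \<in> |Y|"
      using that finite_members
      by (intro wo_rel.finite_has_max[OF wo_rel_card_of]) (auto simp: Field_card_of)
    then have "\<exists>m. m \<in> A \<inter> Y \<and> (\<forall>y\<in>A \<inter> Y. (y, m) \<in> |Y| )" by blast
    then show ?thesis unfolding peak_def by (rule someI_ex)
  qed
  have "|peak_fibre Y k peak x| <o |K|" for x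
  proof -
    have "|heavy (under |Y| x)| <o |K|"
      using card_of_heavy_ordLess[OF card_of_under_ordLess[OF assms infinite_K]] .
    then show ?thesis
      using ordLeq_ordLess_trans[OF card_of_mono1[OF peak_fibre_subset_heavy_under]] peak by blast
  qed
  moreover have "\<forall>A\<in>\<A>. k < card (A \<inter> Y) \<longrightarrow>
      peak A \<in> A \<inter> Y \<and> (\<forall>y\<in>A \<inter> Y. y \<noteq> peak A \<longrightarrow> (y, peak A) \<in> |Y| - Id)"
    using peak by blast
  ultimately have "cf_ordering Y k ( |Y| - Id) peak"
    unfolding cf_ordering_def using wo_rel.WF[OF wo_rel_card_of] by blast
  then show ?thesis by blast
qed

end

locale cf_family_step = cf_family \<A> N K k
  for \<A> :: "'a set set" and N :: "'c set" and K :: "'b set" and k +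
  fixes Y :: "'a set" and S :: "'d set" and t :: nat
  assumes cf_ordering_small: "\<And>Y' :: 'a set. |Y'| \<le>o |S| \<Longrightarrow> \<exists>R peak. cf_ordering Y' t R peak"
    and K_le_S: "|K| \<le>o |S|" and Y_le_cardSuc: "|Y| \<le>o cardSuc |S|" and k_le_t: "k \<le> t"
begin

lemma infinite_S: "infinite S"
  using card_of_ordLeq_infinite[OF K_le_S infinite_K] .

lemma N_le_S: "|N| \<le>o |S|"
  using N_le_K K_le_S by (rule ordLeq_transitive)

lemma card_of_Un_ordLeq_S: "|A| \<le>o |S| \<Longrightarrow> |B| \<le>o |S| \<Longrightarrow> |A \<union> B| \<le>o |S|"
  using card_of_Un_ordLeq_infinite_Field[of "|S|" A B] infinite_S card_of_Card_order[of S]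
  by (simp add: Field_card_of)

definition heavy_closure :: "'a set \<Rightarrow> 'a set" where
  "heavy_closure U = (\<Union>j. ((\<lambda>V. V \<union> (Y \<inter> heavy V)) ^^ j) U)"

lemma mono_heavy_closure_step: "mono (\<lambda>V. V \<union> (Y \<inter> heavy V))"
proof (rule monoI)
  fix V W :: "'a set"
  assume "V \<subseteq> W"
  then show "V \<union> (Y \<inter> heavy V) \<subseteq> W \<union> (Y \<inter> heavy W)" using heavy_mono[of V W] by blast
qed

lemma subset_heavy_closure: "U \<subseteq> heavy_closure U"
proof -
  have "((\<lambda>V. V \<union> (Y \<inter> heavy V)) ^^ 0) U = U" by simp
  then show ?thesis unfolding heavy_closure_def by blast
qed

lemma heavy_closure_mono:
  assumes "U \<subseteq> U'"
  shows "heavy_closure U \<subseteq> heavy_closure U'"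
  unfolding heavy_closure_def using funpow_mono[OF mono_heavy_closure_step assms] by blast

lemma heavy_closure_closed:
  assumes A: "A \<in> \<A>" and "k + 1 \<le> card (A \<inter> heavy_closure U)"
  shows "A \<inter> Y \<subseteq> heavy_closure U"
proof -
  let ?G = "\<lambda>j. ((\<lambda>V. V \<union> (Y \<inter> heavy V)) ^^ j) U"
  obtain s where s: "s \<subseteq> A \<inter> heavy_closure U" "card s = k + 1" "finite s"
    using obtain_subset_with_card_n[OF assms(2)] by metis
  have "mono ?G"
  proof (rule monoI)
    fix i j :: nat
    assume "i \<le> j"
    show "?G i \<subseteq> ?G j" by (rule funpow_mono2[OF mono_heavy_closure_step \<open>i \<le> j\<close> order_refl]) blast
  qed
  with s obtain j where j: "s \<subseteq> ?G j"
    using finite_subset_UN_mono[of ?G s] unfolding heavy_closure_def by blast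
  have "finite (A \<inter> ?G j)" using finite_members[OF A] by blast
  then have "card s \<le> card (A \<inter> ?G j)" using s j by (intro card_mono) blast+
  then have "A \<in> {A \<in> \<A>. k + 1 \<le> card (A \<inter> ?G j)}" using A s by simp
  then have "A \<subseteq> heavy (?G j)" unfolding heavy_def by (rule Union_upper)
  moreover have "?G (Suc j) = ?G j \<union> (Y \<inter> heavy (?G j))" by simp
  ultimately have "A \<inter> Y \<subseteq> ?G (Suc j)" by blast
  then show ?thesis unfolding heavy_closure_def by blast
qed

lemma card_of_heavy_closure_ordLeq:
  assumes "|U| \<le>o |S|"
  shows "|heavy_closure U| \<le>o |S|"
proof -
  have "|((\<lambda>V. V \<union> (Y \<inter> heavy V)) ^^ j) U| \<le>o |S|" for j
  proof (induction j)
    case (Suc j)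
    let ?V = "((\<lambda>V. V \<union> (Y \<inter> heavy V)) ^^ j) U"
    have "|heavy ?V| \<le>o |S|" by (rule card_of_heavy_ordLeq[OF infinite_S N_le_S Suc.IH])
    then have "|Y \<inter> heavy ?V| \<le>o |S|" by (rule ordLeq_transitive[OF card_of_mono1[OF Int_lower2]])
    then show ?case using card_of_Un_ordLeq_S[OF Suc.IH] by simp
  qed (simp add: assms)
  moreover have "|UNIV :: nat set| \<le>o |S|" using infinite_iff_card_of_nat infinite_S by auto
  ultimately show ?thesis
    unfolding heavy_closure_def by (intro card_of_UNION_ordLeq_infinite[OF infinite_S]) simp_all
qed

lemma card_of_under_ordLeq:
  assumes "a \<in> Y"
  shows "|under |Y| a| \<le>o |S|"
proof -
  have "|underS |Y| a| <o |Y|"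
    using card_of_underS[OF card_of_Card_order, of a Y] assms by (simp add: Field_card_of)
  then have "|underS |Y| a| <o cardSuc |S|" using Y_le_cardSuc by (rule ordLess_ordLeq_trans)
  then have "|underS |Y| a| \<le>o |S|"
    by (rule cardSuc_ordLeq_ordLess[OF card_of_Card_order card_of_Card_order, THEN iffD1])
  moreover have "|{a}| \<le>o |S|"
    using ordLess_imp_ordLeq[OF card_of_finite_ordLess_infinite[of "{a}" S]] infinite_S by simp
  ultimately have "|underS |Y| a \<union> {a}| \<le>o |S|" by (rule card_of_Un_ordLeq_S)
  moreover have "under |Y| a \<subseteq> underS |Y| a \<union> {a}" unfolding under_def underS_def by blast
  ultimately show ?thesis using ordLeq_transitive[OF card_of_mono1] by blast
qed

definition stage :: "'a \<Rightarrow> 'a set" where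
  "stage a = heavy_closure (under |Y| a)"

lemma card_of_stage_ordLeq: "a \<in> Y \<Longrightarrow> |stage a| \<le>o |S|"
  unfolding stage_def by (rule card_of_heavy_closure_ordLeq[OF card_of_under_ordLeq])

lemma stage_mono: "(a, b) \<in> |Y| \<Longrightarrow> stage a \<subseteq> stage b"
  unfolding stage_def by (intro heavy_closure_mono under_incr wo_rel.TRANS[OF wo_rel_card_of])

lemma mem_stage_self: "y \<in> Y \<Longrightarrow> y \<in> stage y"
  unfolding stage_def
  using Refl_under_in[OF wo_rel.REFL[OF wo_rel_card_of], of y] subset_heavy_closure
  by (auto simp: Field_card_of)

definition rank :: "'a \<Rightarrow> 'a" where
  "rank y = wo_rel.minim |Y| {a\<in>Y. y \<in> stage a}"

lemma rank_in: "y \<in> Y \<Longrightarrow> rank y \<in> Y"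
  and mem_stage_rank: "y \<in> Y \<Longrightarrow> y \<in> stage (rank y)"
  and rank_least: "y \<in> stage b \<Longrightarrow> b \<in> Y \<Longrightarrow> (rank y, b) \<in> |Y|"
proof -
  have sub: "{a\<in>Y. y \<in> stage a} \<subseteq> Field |Y|" by (auto simp: Field_card_of)
  show "rank y \<in> Y" "y \<in> stage (rank y)" if "y \<in> Y"
    using wo_rel.minim_in[OF wo_rel_card_of sub] mem_stage_self that unfolding rank_def by blast+
  show "(rank y, b) \<in> |Y|" if "y \<in> stage b" "b \<in> Y"
    using wo_rel.minim_least[OF wo_rel_card_of sub] that unfolding rank_def by blast
qed

definition layer :: "'a \<Rightarrow> 'a set" where
  "layer a = {y\<in>Y. rank y = a}"

lemma card_of_layer_ordLeq: "|layer a| \<le>o |S|"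
proof (cases "a \<in> Y")
  case True
  have "layer a \<subseteq> stage a" unfolding layer_def using mem_stage_rank by blast
  then show ?thesis by (rule ordLeq_transitive[OF card_of_mono1 card_of_stage_ordLeq[OF True]])
next
  case False
  then have "layer a = {}" unfolding layer_def using rank_in by blast
  then show ?thesis by (simp add: card_of_empty)
qed

definition peak_rank :: "'a set \<Rightarrow> 'a" where
  "peak_rank A = (SOME a. a \<in> rank ` (A \<inter> Y) \<and> (\<forall>b\<in>rank ` (A \<inter> Y). (b, a) \<in> |Y| ))"

lemma peak_rank:
  assumes "A \<in> \<A>" "A \<inter> Y \<noteq> {}"
  shows "peak_rank A \<in> rank ` (A \<inter> Y)" "\<forall>b\<in>rank ` (A \<inter> Y). (b, peak_rank A) \<in> |Y|"
proof -
  have "\<exists>a\<in>rank ` (A \<inter> Y). \<forall>b\<in>rank ` (A \<inter> Y). (b, a) \<in> |Y|"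
    using assms finite_members rank_in
    by (intro wo_rel.finite_has_max[OF wo_rel_card_of]) (auto simp: Field_card_of)
  then have "\<exists>a. a \<in> rank ` (A \<inter> Y) \<and> (\<forall>b\<in>rank ` (A \<inter> Y). (b, a) \<in> |Y| )" by blast
  then have "peak_rank A \<in> rank ` (A \<inter> Y) \<and> (\<forall>b\<in>rank ` (A \<inter> Y). (b, peak_rank A) \<in> |Y| )"
    unfolding peak_rank_def by (rule someI_ex)
  then show "peak_rank A \<in> rank ` (A \<inter> Y)" "\<forall>b\<in>rank ` (A \<inter> Y). (b, peak_rank A) \<in> |Y|"
    by blast+
qed

lemma card_below_peak_rank_le:
  assumes A: "A \<in> \<A>" and ne: "A \<inter> Y \<noteq> {}"
  shows "card {y\<in>A \<inter> Y. rank y \<noteq> peak_rank A} \<le> k"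
proof (rule ccontr)
  let ?P = "{y\<in>A \<inter> Y. rank y \<noteq> peak_rank A}"
  assume "\<not> card ?P \<le> k"
  then have P_card: "k + 1 \<le> card ?P" by simp
  have "finite ?P" by (rule finite_subset[OF _ finite_members[OF A]]) blast
  moreover have "?P \<noteq> {}"
  proof
    assume "?P = {}"
    then have "card ?P = 0" by (simp only: card.empty)
    with P_card show False by linarith
  qed
  moreover have "rank ` ?P \<subseteq> Field |Y|" using rank_in by (auto simp: Field_card_of)
  ultimately obtain b where b: "b \<in> rank ` ?P" "\<forall>c\<in>rank ` ?P. (c, b) \<in> |Y|"
    using wo_rel.finite_has_max[OF wo_rel_card_of, of "rank ` ?P"] by blast
  have "?P \<subseteq> A \<inter> stage b"
  proof
    fix y assume y: "y \<in> ?P"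
    then have "stage (rank y) \<subseteq> stage b" using b(2) stage_mono by blast
    with y show "y \<in> A \<inter> stage b" using mem_stage_rank by blast
  qed
  then have "card ?P \<le> card (A \<inter> stage b)"
    using finite_members[OF A] by (intro card_mono) auto
  with P_card have "k + 1 \<le> card (A \<inter> stage b)" by linarith
  then have "A \<inter> Y \<subseteq> stage b" using heavy_closure_closed[OF A] unfolding stage_def by blast
  moreover obtain z where z: "peak_rank A = rank z" "z \<in> A \<inter> Y" using peak_rank(1)[OF A ne] by blast
  moreover have "b \<in> Y" using b(1) rank_in by blast
  ultimately have "(peak_rank A, b) \<in> |Y|" using rank_least by auto
  moreover have "(b, peak_rank A) \<in> |Y|" "b \<noteq> peak_rank A" using b(1) peak_rank(2)[OF A ne] by auto
  ultimately show False using antisymD[OF wo_rel.ANTISYM[OF wo_rel_card_of[of Y]]] by blast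
qed

lemma card_peak_layer_gt:
  assumes A: "A \<in> \<A>" and large: "t + k < card (A \<inter> Y)"
  shows "t < card (A \<inter> layer (peak_rank A))"
proof -
  let ?L = "A \<inter> layer (peak_rank A)" and ?P = "{y\<in>A \<inter> Y. rank y \<noteq> peak_rank A}"
  have "finite ?L" "finite ?P" using finite_members[OF A] by (auto simp: layer_def)
  moreover have "?L \<inter> ?P = {}" by (auto simp: layer_def)
  ultimately have "card (?L \<union> ?P) = card ?L + card ?P" by (rule card_Un_disjoint)
  moreover have "?L \<union> ?P = A \<inter> Y" by (auto simp: layer_def)
  moreover have "A \<inter> Y \<noteq> {}" using large by auto
  ultimately show ?thesis using large card_below_peak_rank_le[OF A] by simp
qed

context
  fixes R_layer :: "'a \<Rightarrow> 'a rel" and peak_layer :: "'a \<Rightarrow> 'a set \<Rightarrow> 'a"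
  assumes cf_ordering_layer: "\<And>a. cf_ordering (layer a) t (R_layer a) (peak_layer a)"
begin

definition glued_rel :: "'a rel" where
  "glued_rel = {(y, x). y \<in> Y \<and> x \<in> Y \<and>
     ((rank y, rank x) \<in> |Y| - Id \<or> rank y = rank x \<and> (y, x) \<in> R_layer (rank x))}"

definition glued_peak :: "'a set \<Rightarrow> 'a" where
  "glued_peak A = peak_layer (peak_rank A) A"

lemma wf_glued_rel: "wf glued_rel"
proof -
  let ?R1 = "inv_image ( |Y| - Id) rank"
  let ?R2 = "inv_image (same_fst (\<lambda>_. True) R_layer) (\<lambda>y. (rank y, y))"
  have "wf ?R1" using wo_rel.WF[OF wo_rel_card_of[of Y]] by (rule wf_inv_image)
  moreover have "wf ?R2"
    using cf_ordering_layer by (intro wf_inv_image wf_same_fst) (auto simp: cf_ordering_def)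
  moreover have "?R1 O ?R2 \<subseteq> ?R1" by (auto simp: same_fst_def)
  ultimately have "wf (?R1 \<union> ?R2)" by (rule wf_union_compatible)
  moreover have "glued_rel \<subseteq> ?R1 \<union> ?R2" unfolding glued_rel_def by (auto simp: same_fst_def)
  ultimately show ?thesis by (rule wf_subset)
qed

lemma glued_peak:
  assumes A: "A \<in> \<A>" "t + k < card (A \<inter> Y)"
  shows "glued_peak A \<in> A \<inter> layer (peak_rank A)"
    and "\<forall>y\<in>A \<inter> Y. y \<noteq> glued_peak A \<longrightarrow> (y, glued_peak A) \<in> glued_rel"
proof -
  let ?a = "peak_rank A"
  have layer_peak: "glued_peak A \<in> A \<inter> layer ?a \<and>
      (\<forall>y\<in>A \<inter> layer ?a. y \<noteq> glued_peak A \<longrightarrow> (y, glued_peak A) \<in> R_layer ?a)"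
    using cf_ordering_layer[of ?a] card_peak_layer_gt[OF A] A(1)
    unfolding cf_ordering_def glued_peak_def by blast
  then show "glued_peak A \<in> A \<inter> layer ?a" by blast
  have "(rank y, ?a) \<in> |Y|" if "y \<in> A \<inter> Y" for y
    using peak_rank(2)[OF A(1)] that by blast
  then show "\<forall>y\<in>A \<inter> Y. y \<noteq> glued_peak A \<longrightarrow> (y, glued_peak A) \<in> glued_rel"
    using layer_peak unfolding glued_rel_def layer_def by auto
qed

text \<open>
  A member with peak x has more than t points in the layer of x, all in the fibre of x for that
  layer; as k \<le> t, this makes it heavy for that fibre.
\<close>

lemma peak_fibre_glued_subset:
  "peak_fibre Y (t + k) glued_peak x \<subseteq> heavy (peak_fibre (layer (rank x)) t (peak_layer (rank x)) x)"
proof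
  let ?U = "peak_fibre (layer (rank x)) t (peak_layer (rank x)) x"
  fix z assume "z \<in> peak_fibre Y (t + k) glued_peak x"
  then obtain A where A: "A \<in> \<A>" "t + k < card (A \<inter> Y)" "glued_peak A = x" "z \<in> A \<inter> Y"
    unfolding peak_fibre_def by blast
  have rank_x: "rank x = peak_rank A" using glued_peak(1)[OF A(1,2)] A(3) by (simp add: layer_def)
  then have layer_large: "t < card (A \<inter> layer (rank x))" using card_peak_layer_gt[OF A(1,2)] by simp
  have "peak_layer (rank x) A = x" using A(3) rank_x by (simp add: glued_peak_def)
  with layer_large have "A \<inter> layer (rank x) \<subseteq> A \<inter> ?U"
    unfolding peak_fibre_def using A(1) by blast
  moreover have "finite (A \<inter> ?U)" using finite_members[OF A(1)] by blast
  ultimately have "card (A \<inter> layer (rank x)) \<le> card (A \<inter> ?U)" by (intro card_mono)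
  with layer_large k_le_t have "A \<in> {A \<in> \<A>. k + 1 \<le> card (A \<inter> ?U)}" using A(1) by simp
  then show "z \<in> heavy ?U" unfolding heavy_def using A(4) by blast
qed

lemma cf_ordering_glued: "cf_ordering Y (t + k) glued_rel glued_peak"
proof -
  have "|peak_fibre Y (t + k) glued_peak x| <o |K|" for x
  proof -
    have "|peak_fibre (layer (rank x)) t (peak_layer (rank x)) x| <o |K|"
      using cf_ordering_layer unfolding cf_ordering_def by blast
    then have "|heavy (peak_fibre (layer (rank x)) t (peak_layer (rank x)) x)| <o |K|"
      by (rule card_of_heavy_ordLess)
    then show ?thesis by (rule ordLeq_ordLess_trans[OF card_of_mono1[OF peak_fibre_glued_subset]])
  qed
  moreover have "glued_peak A \<in> A \<inter> Y"
    if "A \<in> \<A>" "t + k < card (A \<inter> Y)" for A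
    using glued_peak(1)[OF that] by (auto simp: layer_def)
  ultimately show ?thesis unfolding cf_ordering_def using wf_glued_rel glued_peak(2) by blast
qed

end

lemma cf_ordering_step: "\<exists>R peak. cf_ordering Y (t + k) R peak"
proof -
  obtain R_layer peak_layer where "\<And>a. cf_ordering (layer a) t (R_layer a) (peak_layer a)"
    using cf_ordering_small[OF card_of_layer_ordLeq] by metis
  then show ?thesis using cf_ordering_glued by blast
qed

end

context cf_family
begin

lemma cf_ordering_succ_chain:
  fixes S :: "nat \<Rightarrow> 'a set"
  assumes S0: "|S 0| =o |K|" and S_Suc: "\<forall>i<m. |S (Suc i)| =o cardSuc |S i|"
  shows "i \<le> m \<Longrightarrow> |Y| \<le>o |S i| \<Longrightarrow> \<exists>R peak. cf_ordering Y ((i + 1) * k) R peak"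
proof (induction i arbitrary: Y)
  case 0
  then have "|Y| \<le>o |K|" using S0 by (simp add: ordLeq_ordIso_trans)
  then show ?case using cf_ordering_if_card_of_ordLeq by simp
next
  case (Suc i)
  then have "i < m" by simp
  interpret step: cf_family_step \<A> N K k Y "S i" "(i + 1) * k"
  proof unfold_locales
    show "\<exists>R peak. cf_ordering Y' ((i + 1) * k) R peak" if "|Y'| \<le>o |S i|" for Y' :: "'a set"
      using Suc.IH[OF less_imp_le[OF \<open>i < m\<close>] that] .
    show "|K| \<le>o |S i|" using card_of_ordLeq_succ_chain[OF S0 S_Suc] \<open>i < m\<close> by simp
    show "|Y| \<le>o cardSuc |S i|" using ordLeq_ordIso_trans[OF Suc.prems(2)] S_Suc \<open>i < m\<close> by blast
    show "k \<le> (i + 1) * k" by simp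
  qed
  have "(i + 1) * k + k = (Suc i + 1) * k" by simp
  then show ?case using step.cf_ordering_step by metis
qed

end

theorem theorem2p1:
  fixes K :: "'b set" and N :: "'c set" and X :: "'a set" and \<A> :: "'a set set"
    and n k :: nat
  assumes "infinite N"
    and "(card_of N, card_of K) \<in> ordLeq"
    and "regularCard (card_of N)"
    and "n \<ge> 1" and "k \<ge> 1"
    and "succ_pow K (n - 1) X"
    and "\<forall>A\<in>\<A>. A \<subseteq> X \<and> finite A \<and> card A > n * k"
    and "almost_disjoint (k + 1) N \<A>"
  shows "chi_CF_le \<A> K"
proof -
  interpret cf_family \<A> N K k
    using assms by unfold_locales auto
  obtain S :: "nat \<Rightarrow> 'a set" where S: "|S 0| =o |K|" "\<forall>i<n - 1. |S (Suc i)| =o cardSuc |S i|"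
    and X: "S (n - 1) = X"
    using assms(6) unfolding succ_pow_def by blast
  obtain R peak where "cf_ordering X ((n - 1 + 1) * k) R peak"
    using cf_ordering_succ_chain[OF S order_refl] X ordLeq_refl[OF card_of_Card_order] by blast
  then have "cf_ordering X (n * k) R peak" using \<open>n \<ge> 1\<close> by simp
  then show ?thesis by (rule chi_CF_le_if_cf_ordering) (use assms(7) in blast)
qed

end
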